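(* Under the assumptions of the preceding theorem ( $g:\mathbb{R}^n\to\mathbb{R}^s$ of class $C^2$, $D\subset\mathbb{R}^s$ closed, $\Gamma=g^{-1}(D)$, $\bar x\in\Gamma$, (A1), (A2), $\bar x^*\in\hat N_\Gamma(\bar x)$, and $\bar\lambda$ the unique vector with $\bar\lambda\in\hat N_D(g(\bar x))$, $\nabla g(\bar x)^T\bar\lambda=\bar x^*$), for every $w\in\mathbb{R}^n$, $$\hat D^*\hat N_\Gamma(\bar x,\bar x^* )(w)=\nabla^2\langle\bar\lambda,g\rangle(\bar x)w+\nabla g(\bar x)^T\,\hat D^*\hat N_D(g(\bar x),\bar\lambda)(\nabla g(\bar x)w).$$
   Context: Standing assumptions (A1), (A2) for $g:\mathbb{R}^n\to\mathbb{R}^s$ ($C^2$), closed $D\subset\mathbb{R}^s$, $\Gamma=g^{-1}(D)$, $\bar x\in\Gamma$: (A1) There exist a closed set $\Theta\subset\mathbb{R}^d$, a twice continuously differentiable mapping $h:\mathbb{R}^s\to\mathbb{R}^d$ and a neighborhood $\mathcal V$ of $g(\bar x)$ such that $\nabla h(g(\bar x))$ is surjective and $D\cap\mathcal V=\{z\in\mathcal V\mid h(z)\in\Theta\}$. (A2) $\operatorname{range}\nabla g(\bar x)+\ker\nabla h(g(\bar x))=\mathbb{R}^s$. Regular normal cone $\hat N_A(\bar a)=(T_A(\bar a))^\circ$ with $T_A(\bar a)=\limsup_{t\searrow0}(A-\bar a)/t$. For a multifunction $F:\mathbb{R}^n\rightrightarrows\mathbb{R}^z$ with $(\bar u,\bar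 v)\in\operatorname{gph}F$, the regular coderivative is $\hat D^*F(\bar u,\bar v)(v^* )=\{u^*\mid (u^*,-v^* )\in\hat N_{\operatorname{gph}F}(\bar u,\bar v)\}$. $\nabla^2\langle\lambda,g\rangle(x)$ is the Hessian of $x\mapsto\langle\lambda,g(x)\rangle$. *)

theory Defs
  imports "HOL-Analysis.Analysis"
begin

definition tangent_cone :: "'a::real_normed_vector set \<Rightarrow> 'a \<Rightarrow> 'a set" where
  "tangent_cone A a = {v. \<exists>t u. (\<forall>k. t k > (0::real)) \<and> t \<longlonglongrightarrow> 0 \<and> u \<longlonglongrightarrow> v
                                 \<and> (\<forall>k. a + t k *\<^sub>R u k \<in> A)}"

definition polar_cone :: "'a::real_inner set \<Rightarrow> 'a set" where
  "polar_cone K = {y. \<forall>v\<in>K. y \<bullet> v \<le> 0}"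

definition reg_normal_cone :: "'a::real_inner set \<Rightarrow> 'a \<Rightarrow> 'a set" where
  "reg_normal_cone A a = (if a \<in> A then polar_cone (tangent_cone A a) else {})"

definition graph_mf :: "('a \<Rightarrow> 'b set) \<Rightarrow> ('a \<times> 'b) set" where
  "graph_mf F = {(u, v). v \<in> F u}"

definition reg_coderiv ::
  "('a::euclidean_space \<Rightarrow> 'b::euclidean_space set) \<Rightarrow> 'a \<Rightarrow> 'b \<Rightarrow> 'b \<Rightarrow> 'a set" where
  "reg_coderiv F u v vs = {us. (us, - vs) \<in> reg_normal_cone (graph_mf F) (u, v)}"

text \<open>Given the second derivative D2 (a bounded bilinear map) of g at x, the vector
  \<nabla>^2<lam,g>(x) w, i.e. the gradient of u \<mapsto> <lam, D2 w u>.\<close>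
definition hess_vec :: "'b::euclidean_space \<Rightarrow> ('a::euclidean_space \<Rightarrow>\<^sub>L ('a \<Rightarrow>\<^sub>L 'b)) \<Rightarrow> 'a \<Rightarrow> 'a" where
  "hess_vec lam D2 w = (\<Sum>b\<in>Basis. (lam \<bullet> blinfun_apply (blinfun_apply D2 w) b) *\<^sub>R b)"

end

theory Submission
  imports Defs
begin

text \<open>
  Near the reference points, \<open>\<Gamma> = (h \<circ> g)\<^sup>-\<^sup>1(\<Theta>)\<close> and \<open>D = h\<^sup>-\<^sup>1(\<Theta>)\<close> are preimages of \<open>\<Theta>\<close>
  under maps with surjective derivative: for \<open>h\<close> by (A1), for \<open>h \<circ> g\<close> by (A1) and (A2). So it
  suffices to compute the coderivative of the normal cone mapping of \<open>A = F\<^sup>-\<^sup>1(\<Theta>)\<close> for such an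
  \<open>F\<close> and then apply the result twice, once to \<open>F = h \<circ> g\<close> and once to \<open>F = h\<close>, the two
  formulas being linked by the chain rule
  \<open>\<nabla>\<^sup>2\<langle>\<mu>, h \<circ> g\<rangle> = \<nabla>\<^sup>2\<langle>\<nabla>h\<^sup>T\<mu>, g\<rangle> + \<nabla>g\<^sup>T \<nabla>\<^sup>2\<langle>\<mu>, h\<rangle> \<nabla>g\<close>.

  For \<open>A = F\<^sup>-\<^sup>1(\<Theta>)\<close>, the Lyusternik--Graves theorem (obtained here from the inverse function
  theorem) gives \<open>T\<^sub>A(x) = F'(x)\<^sup>-\<^sup>1 T\<^sub>\<Theta>(F x)\<close>, hence \<open>N\<^sub>A(x) = F'(x)\<^sup>T N\<^sub>\<Theta>(F x)\<close>, for all \<open>x\<close>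
  near \<open>x\<^sub>0\<close>. Passing to difference quotients in this representation along sequences shows that
  the tangent cone to the graph of \<open>N\<^sub>A\<close> at \<open>(x\<^sub>0, F'(x\<^sub>0)\<^sup>T\<mu>)\<close> consists of the pairs
  \<open>(v, \<nabla>\<^sup>2\<langle>\<mu>,F\<rangle>v + F'(x\<^sub>0)\<^sup>T\<nu>)\<close> with \<open>(F'(x\<^sub>0)v, \<nu>)\<close> tangent to the graph of \<open>N\<^sub>\<Theta>\<close>; the
  converse inclusion needs that the multipliers \<open>\<mu>\<^sub>k\<close> along a sequence are controlled by
  the surjectivity of \<open>F'(x\<^sub>0)\<close>. Since the Hessian is symmetric, taking polars yields the
  coderivative formula.
\<close>

section \<open>Tangent cones and difference quotients\<close>

lemmas linear_blinfun_apply = bounded_linear.linear[OF blinfun.bounded_linear_right]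

lemma tangent_coneI_eventually:
  fixes a :: "'a::real_normed_vector"
  assumes t: "\<forall>k. t k > (0::real)" "t \<longlonglongrightarrow> 0" and u: "u \<longlonglongrightarrow> v"
    and ev: "eventually (\<lambda>k. a + t k *\<^sub>R u k \<in> A) sequentially"
  shows "v \<in> tangent_cone A a"
proof -
  obtain N where N: "\<And>k. k \<ge> N \<Longrightarrow> a + t k *\<^sub>R u k \<in> A"
    using ev unfolding eventually_sequentially by blast
  have "(\<lambda>k. t (k + N)) \<longlonglongrightarrow> 0" "(\<lambda>k. u (k + N)) \<longlonglongrightarrow> v"
    using t(2) u by (auto intro: LIMSEQ_ignore_initial_segment)
  then show ?thesis
    unfolding tangent_cone_def using t(1) N
    by (intro CollectI exI[of _ "\<lambda>k. t (k + N)"] exI[of _ "\<lambda>k. u (k + N)"]) simp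
qed

lemma zero_in_tangent_cone:
  fixes a :: "'a::real_normed_vector"
  assumes "a \<in> A"
  shows "0 \<in> tangent_cone A a"
  using assms LIMSEQ_inverse_real_of_nat unfolding tangent_cone_def
  by (intro CollectI exI[of _ "\<lambda>k. inverse (real (Suc k))"] exI[of _ "\<lambda>k. 0"]) simp

lemma tendsto_difference_quotient:
  fixes G :: "'a::real_normed_vector \<Rightarrow> 'b::real_normed_vector"
  assumes G: "(G has_derivative G') (at y)"
    and t: "\<forall>k. t k > (0::real)" "t \<longlonglongrightarrow> 0" and d: "d \<longlonglongrightarrow> d0"
  shows "(\<lambda>k. inverse (t k) *\<^sub>R (G (y + t k *\<^sub>R d k) - G y)) \<longlonglongrightarrow> G' d0"
proof -
  define \<rho> where "\<rho> = (\<lambda>h. norm (G (y + h) - G y - G' h) / norm h)"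
  define r where "r k = inverse (t k) *\<^sub>R (G (y + t k *\<^sub>R d k) - G y - G' (t k *\<^sub>R d k))" for k
  have lin: "linear G'" using G by (simp add: has_derivative_at bounded_linear.linear)
  have tk: "0 < t k" for k using t(1) by blast
  \<comment> \<open>Division by zero makes \<open>\<rho> 0 = 0\<close>, so \<open>\<rho>\<close> is continuous at the origin.\<close>
  have "isCont \<rho> 0"
    using G unfolding has_derivative_at isCont_def \<rho>_def by simp
  moreover have "(\<lambda>k. t k *\<^sub>R d k) \<longlonglongrightarrow> 0"
    using tendsto_scaleR[OF t(2) d] by simp
  ultimately have "(\<lambda>k. \<rho> (t k *\<^sub>R d k)) \<longlonglongrightarrow> \<rho> 0"
    by (rule isCont_tendsto_compose)
  moreover have "\<rho> 0 = 0" by (simp add: \<rho>_def)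
  ultimately have "(\<lambda>k. \<rho> (t k *\<^sub>R d k) * norm (d k)) \<longlonglongrightarrow> 0 * norm d0"
    by (intro tendsto_mult tendsto_norm d) simp
  moreover have "\<rho> (t k *\<^sub>R d k) * norm (d k) = norm (r k)" for k
  proof (cases "d k = 0")
    case False
    have "\<rho> (t k *\<^sub>R d k) = norm (t k *\<^sub>R r k) / (t k * norm (d k))"
      using tk[of k] by (simp add: \<rho>_def r_def)
    then show ?thesis using tk[of k] False by (simp add: field_simps)
  qed (use linear_0[OF lin] in \<open>simp add: \<rho>_def r_def\<close>)
  ultimately have "(\<lambda>k. norm (r k)) \<longlonglongrightarrow> 0" by simp
  then have "r \<longlonglongrightarrow> 0" by (rule tendsto_norm_zero_cancel)
  moreover have "(\<lambda>k. G' (d k)) \<longlonglongrightarrow> G' d0"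
    using G d by (simp add: has_derivative_at bounded_linear.tendsto)
  ultimately have "(\<lambda>k. r k + G' (d k)) \<longlonglongrightarrow> 0 + G' d0" by (rule tendsto_add)
  moreover have "r k + G' (d k) = inverse (t k) *\<^sub>R (G (y + t k *\<^sub>R d k) - G y)" for k
    using tk[of k] linear_scale[OF lin] by (simp add: r_def scaleR_diff_right)
  ultimately show ?thesis by simp
qed

lemma tangent_cone_image_subset:
  fixes F :: "'a::real_normed_vector \<Rightarrow> 'c::real_normed_vector"
  assumes F: "(F has_derivative F') (at x)" and A: "\<forall>\<^sub>F y in nhds x. y \<in> A \<longrightarrow> F y \<in> \<Theta>"
    and v: "v \<in> tangent_cone A x"
  shows "F' v \<in> tangent_cone \<Theta> (F x)"
proof -
  obtain t u where t: "\<forall>k. t k > (0::real)" "t \<longlonglongrightarrow> 0" and u: "u \<longlonglongrightarrow> v"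
    and mem: "\<forall>k. x + t k *\<^sub>R u k \<in> A"
    using v unfolding tangent_cone_def by blast
  define a where "a k = inverse (t k) *\<^sub>R (F (x + t k *\<^sub>R u k) - F x)" for k
  have "(\<lambda>k. x + t k *\<^sub>R u k) \<longlonglongrightarrow> x + 0 *\<^sub>R v" by (intro tendsto_intros t u)
  then have "\<forall>\<^sub>F k in sequentially. x + t k *\<^sub>R u k \<in> A \<longrightarrow> F (x + t k *\<^sub>R u k) \<in> \<Theta>"
    using eventually_compose_filterlim[OF A] by simp
  then have "\<forall>\<^sub>F k in sequentially. F x + t k *\<^sub>R a k \<in> \<Theta>"
    using mem t(1) by (simp add: a_def less_imp_neq[symmetric])
  then show ?thesis
    by (rule tangent_coneI_eventually[OF t tendsto_difference_quotient[OF F t u, folded a_def]])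
qed

section \<open>Adjoints of bounded linear maps\<close>

lemma adjoint_blinfun_compose:
  fixes B :: "'b::euclidean_space \<Rightarrow>\<^sub>L 'c::euclidean_space" and C :: "'a::euclidean_space \<Rightarrow>\<^sub>L 'b"
  shows "adjoint (B o\<^sub>L C) = adjoint C \<circ> adjoint B"
  by (rule adjoint_unique) (simp add: adjoint_clauses(1)[OF linear_blinfun_apply])

lemma adjoint_blinfun_add:
  fixes B C :: "'a::euclidean_space \<Rightarrow>\<^sub>L 'b::euclidean_space"
  shows "adjoint (B + C) = (\<lambda>m. adjoint B m + adjoint C m)"
  by (rule adjoint_unique)
    (simp add: adjoint_clauses(1)[OF linear_blinfun_apply] blinfun.add_left inner_add)

lemma adjoint_blinfun_diff:
  fixes B C :: "'a::euclidean_space \<Rightarrow>\<^sub>L 'b::euclidean_space"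
  shows "adjoint (B - C) = (\<lambda>m. adjoint B m - adjoint C m)"
  by (rule adjoint_unique)
    (simp add: adjoint_clauses(1)[OF linear_blinfun_apply] blinfun.diff_left inner_diff)

lemma adjoint_blinfun_scaleR:
  fixes B :: "'a::euclidean_space \<Rightarrow>\<^sub>L 'b::euclidean_space"
  shows "adjoint (c *\<^sub>R B) = (\<lambda>m. c *\<^sub>R adjoint B m)"
  by (rule adjoint_unique) (simp add: adjoint_clauses(1)[OF linear_blinfun_apply] scaleR_blinfun.rep_eq)

lemma linear_adjoint_blinfun: "linear (adjoint (B :: 'a::euclidean_space \<Rightarrow>\<^sub>L 'b::euclidean_space))"
  by (rule adjoint_linear[OF linear_blinfun_apply])

lemma adjoint_blinfun_eq_sum:
  fixes B :: "'a::euclidean_space \<Rightarrow>\<^sub>L 'b::euclidean_space"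
  shows "adjoint B m = (\<Sum>b\<in>Basis. (m \<bullet> B b) *\<^sub>R b)"
  by (subst euclidean_representation[symmetric])
    (simp add: adjoint_clauses(2)[OF linear_blinfun_apply])

lemma hess_vec_eq_adjoint: "hess_vec lam D2 w = adjoint (D2 w) lam"
  unfolding hess_vec_def adjoint_blinfun_eq_sum ..

lemma adjoint_second_derivative_compose:
  fixes H' :: "'b::euclidean_space \<Rightarrow>\<^sub>L 'c::euclidean_space" and H'' :: "'b \<Rightarrow> ('b \<Rightarrow>\<^sub>L 'c)"
    and G' :: "'a::euclidean_space \<Rightarrow>\<^sub>L 'b" and G'' :: "'a \<Rightarrow>\<^sub>L ('a \<Rightarrow>\<^sub>L 'b)"
  shows "adjoint ((H' o\<^sub>L G'' w) + (H'' (G' w) o\<^sub>L G')) \<mu>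
      = hess_vec (adjoint H' \<mu>) G'' w + adjoint G' (adjoint (H'' (G' w)) \<mu>)"
  by (simp add: hess_vec_eq_adjoint adjoint_blinfun_add adjoint_blinfun_compose)

lemma norm_adjoint_blinfun_le:
  fixes B :: "'a::euclidean_space \<Rightarrow>\<^sub>L 'b::euclidean_space"
  shows "norm (adjoint B m) \<le> norm B * norm m"
proof -
  define z where "z = adjoint B m"
  have "norm z ^ 2 = B z \<bullet> m"
    unfolding z_def by (simp add: power2_norm_eq_inner adjoint_clauses(1)[OF linear_blinfun_apply])
  also have "\<dots> \<le> norm B * norm z * norm m"
    by (metis norm_cauchy_schwarz norm_blinfun mult_right_mono norm_ge_zero order_trans)
  finally show ?thesis unfolding z_def[symmetric]
    by (cases "z = 0") (auto simp: power2_eq_square mult.assoc mult.left_commute)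
qed

lemma tendsto_adjoint_blinfun:
  fixes B :: "'x \<Rightarrow> ('a::euclidean_space \<Rightarrow>\<^sub>L 'b::euclidean_space)"
  assumes "(B \<longlongrightarrow> B0) F" "(m \<longlongrightarrow> m0) F"
  shows "((\<lambda>k. adjoint (B k) (m k)) \<longlongrightarrow> adjoint B0 m0) F"
  unfolding adjoint_blinfun_eq_sum by (intro tendsto_intros blinfun.tendsto assms)

lemma adjoint_cancel_right_inverse:
  fixes M :: "'a::euclidean_space \<Rightarrow> 'b::euclidean_space"
  assumes "linear M" "linear R" "\<And>z. M (R z) = z"
  shows "adjoint R (adjoint M m) = m"
  by (rule vector_eq_ldot[THEN iffD1]) (simp add: assms adjoint_clauses(1))

lemma adjoint_right_inverse_orthogonal_kernel:
  fixes M :: "'a::euclidean_space \<Rightarrow> 'b::euclidean_space"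
  assumes M: "linear M" and R: "linear R" and MR: "\<And>z. M (R z) = z"
    and y: "\<And>v. M v = 0 \<Longrightarrow> y \<bullet> v = 0"
  shows "adjoint M (adjoint R y) = y"
proof (rule vector_eq_ldot[THEN iffD1, rule_format])
  fix z
  have "M (z - R (M z)) = 0" using M MR by (simp add: linear_diff)
  then have "y \<bullet> (z - R (M z)) = 0" by (rule y)
  then have "y \<bullet> R (M z) = y \<bullet> z" by (simp add: inner_diff_right)
  then show "z \<bullet> adjoint M (adjoint R y) = z \<bullet> y"
    by (simp add: adjoint_clauses(1)[OF M] adjoint_clauses(1)[OF R] inner_commute)
qed

lemma adjoint_blinfun_eq_add_quotient:
  fixes B L :: "'a::euclidean_space \<Rightarrow>\<^sub>L 'c::euclidean_space"
  assumes "t \<noteq> 0"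
  shows "adjoint B m = adjoint L m + t *\<^sub>R adjoint (inverse t *\<^sub>R (B - L)) m"
  using assms by (simp add: adjoint_blinfun_scaleR adjoint_blinfun_diff)

lemma adjoint_left_inverse:
  fixes L :: "'a::euclidean_space \<Rightarrow>\<^sub>L 'c::euclidean_space"
  assumes "surj L"
  obtains N where "bounded_linear N" "\<And>m. N (adjoint L m) = m"
proof -
  obtain R where R: "linear R" "L \<circ> R = id"
    using linear_surjective_right_inverse[OF linear_blinfun_apply assms] by blast
  show thesis
  proof
    show "bounded_linear (adjoint R)"
      using adjoint_linear[OF R(1)] by (simp add: linear_conv_bounded_linear)
    show "adjoint R (adjoint L m) = m" for m
      by (rule adjoint_cancel_right_inverse[OF linear_blinfun_apply R(1)]) (use R(2) in \<open>simp add: pointfree_idE\<close>)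
  qed
qed

lemma multiplier_estimate:
  fixes L Q :: "'a::euclidean_space \<Rightarrow>\<^sub>L 'c::euclidean_space"
  assumes N: "\<And>m. N (adjoint L m) = m" "\<And>z. norm (N z) \<le> norm z * K" and t: "0 < t" and K: "0 < K"
    and eq: "adjoint L (m - m0) = t *\<^sub>R (y - adjoint Q m)" and small: "K * (t * norm Q) < 1/2"
  shows "norm (m - m0) \<le> 2 * K * (t * norm y) + 2 * (K * (t * norm Q)) * norm m0"
proof -
  define c where "c = K * (t * norm Q)"
  have "norm (m - m0) = norm (N (t *\<^sub>R (y - adjoint Q m)))"
    using N(1) eq by metis
  also have "\<dots> \<le> t * norm (y - adjoint Q m) * K"
    using N(2)[of "t *\<^sub>R (y - adjoint Q m)"] t by simp
  also have "\<dots> \<le> t * (norm y + norm Q * norm m) * K"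
    using norm_triangle_ineq4[of y "adjoint Q m"] norm_adjoint_blinfun_le[of Q m] t K
    by (intro mult_right_mono mult_left_mono) (linarith | simp)+
  also have "\<dots> \<le> K * (t * norm y) + c * norm (m - m0) + c * norm m0"
  proof -
    have "c * norm m \<le> c * (norm (m - m0) + norm m0)"
      using norm_triangle_ineq[of "m - m0" m0] t K by (intro mult_left_mono) (simp_all add: c_def)
    then show ?thesis by (simp add: c_def algebra_simps)
  qed
  \<comment> \<open>The term \<open>c \<parallel>m - m\<^sub>0\<parallel>\<close> is absorbed into the left-hand side because \<open>c < 1/2\<close>.\<close>
  moreover have "c * norm (m - m0) \<le> 1/2 * norm (m - m0)"
    using small unfolding c_def by (intro mult_right_mono) simp_all
  ultimately show ?thesis unfolding c_def[symmetric] by linarith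
qed

lemma multiplier_tendsto:
  fixes L :: "'a::euclidean_space \<Rightarrow>\<^sub>L 'c::euclidean_space" and Q :: "nat \<Rightarrow> ('a \<Rightarrow>\<^sub>L 'c)"
  assumes L: "surj L" and t: "\<forall>k. 0 < t k" "t \<longlonglongrightarrow> 0" and Q: "Q \<longlonglongrightarrow> Q0" and y: "y \<longlonglongrightarrow> y0"
    and eq: "\<forall>\<^sub>F k in sequentially. adjoint L (m k - m0) = t k *\<^sub>R (y k - adjoint (Q k) (m k))"
  shows "m \<longlonglongrightarrow> m0"
proof -
  obtain N where N: "bounded_linear N" "\<And>m. N (adjoint L m) = m"
    using adjoint_left_inverse[OF L] by blast
  obtain K where K: "K > 0" "\<And>z. norm (N z) \<le> norm z * K"
    using bounded_linear.pos_bounded[OF N(1)] by blast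
  have "(\<lambda>k. K * (t k * norm (Q k))) \<longlonglongrightarrow> K * (0 * norm Q0)"
    by (intro tendsto_intros t Q)
  then have "\<forall>\<^sub>F k in sequentially. K * (t k * norm (Q k)) < 1/2"
    by (rule order_tendstoD(2)) simp
  with eq have "\<forall>\<^sub>F k in sequentially.
      norm (m k - m0) \<le> 2 * K * (t k * norm (y k)) + 2 * (K * (t k * norm (Q k))) * norm m0"
    by eventually_elim (use multiplier_estimate[OF N(2) K(2) _ K(1)] t(1) in blast)
  moreover have "(\<lambda>k. 2 * K * (t k * norm (y k)) + 2 * (K * (t k * norm (Q k))) * norm m0) \<longlonglongrightarrow> 0"
    using tendsto_intros(1)[of "2 * K"] by (auto intro!: tendsto_eq_intros t y Q)
  ultimately have "(\<lambda>k. m k - m0) \<longlonglongrightarrow> 0" by (rule Lim_null_comparison)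
  then show ?thesis by (simp add: LIM_zero_iff)
qed

lemma multiplier_quotient_tendsto:
  fixes L :: "'a::euclidean_space \<Rightarrow>\<^sub>L 'c::euclidean_space" and Q :: "nat \<Rightarrow> ('a \<Rightarrow>\<^sub>L 'c)"
  assumes L: "surj L" and t: "\<forall>k. 0 < t k" "t \<longlonglongrightarrow> 0" and Q: "Q \<longlonglongrightarrow> Q0" and y: "y \<longlonglongrightarrow> y0"
    and eq: "\<forall>\<^sub>F k in sequentially. adjoint L (m k - m0) = t k *\<^sub>R (y k - adjoint (Q k) (m k))"
  obtains \<nu>0 where "(\<lambda>k. inverse (t k) *\<^sub>R (m k - m0)) \<longlonglongrightarrow> \<nu>0" "adjoint L \<nu>0 = y0 - adjoint Q0 m0"
proof -
  obtain N where N: "bounded_linear N" "\<And>m. N (adjoint L m) = m"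
    using adjoint_left_inverse[OF L] by blast
  define \<nu> where "\<nu> k = inverse (t k) *\<^sub>R (m k - m0)" for k
  have L\<nu>: "\<forall>\<^sub>F k in sequentially. adjoint L (\<nu> k) = y k - adjoint (Q k) (m k)"
    using eq
  proof eventually_elim
    case (elim k)
    have "adjoint L (\<nu> k) = inverse (t k) *\<^sub>R adjoint L (m k - m0)"
      unfolding \<nu>_def by (rule linear_scale[OF linear_adjoint_blinfun])
    then show ?case
      using elim t(1) by (simp add: less_imp_neq[symmetric])
  qed
  have lim: "(\<lambda>k. y k - adjoint (Q k) (m k)) \<longlonglongrightarrow> y0 - adjoint Q0 m0"
    by (intro tendsto_diff y tendsto_adjoint_blinfun Q multiplier_tendsto[OF L t Q y eq])
  have "\<forall>\<^sub>F k in sequentially. N (y k - adjoint (Q k) (m k)) = \<nu> k"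
    using L\<nu> by eventually_elim (metis N(2))
  then have \<nu>: "\<nu> \<longlonglongrightarrow> N (y0 - adjoint Q0 m0)"
    using bounded_linear.tendsto[OF N(1) lim] by (rule Lim_transform_eventually[rotated])
  moreover have "adjoint L (N (y0 - adjoint Q0 m0)) = y0 - adjoint Q0 m0"
  proof (rule tendsto_unique[OF trivial_limit_sequentially])
    show "(\<lambda>k. adjoint L (\<nu> k)) \<longlonglongrightarrow> adjoint L (N (y0 - adjoint Q0 m0))"
      using \<nu> by (intro tendsto_adjoint_blinfun tendsto_const)
    show "(\<lambda>k. adjoint L (\<nu> k)) \<longlonglongrightarrow> y0 - adjoint Q0 m0"
      using lim L\<nu> by (rule Lim_transform_eventually[OF _ eventually_mono]) simp
  qed
  ultimately show thesis unfolding \<nu>_def by (rule that)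
qed

section \<open>Polar cones under linear maps\<close>

lemma polar_cone_orthogonal_kernel:
  fixes M :: "'a::euclidean_space \<Rightarrow> 'b::euclidean_space"
  assumes "linear M" "0 \<in> K" "y \<in> polar_cone (M -` K)" "M v = 0"
  shows "y \<bullet> v = 0"
proof -
  have "v \<in> M -` K" "- v \<in> M -` K" using assms by (simp_all add: linear_neg)
  then have "y \<bullet> v \<le> 0" "y \<bullet> (- v) \<le> 0" using assms(3) unfolding polar_cone_def by blast+
  then show ?thesis by simp
qed

lemma polar_cone_linear_preimage:
  fixes M :: "'a::euclidean_space \<Rightarrow> 'b::euclidean_space"
  assumes M: "linear M" "surj M" and K: "0 \<in> K"
  shows "polar_cone (M -` K) = adjoint M ` polar_cone K"
proof
  show "adjoint M ` polar_cone K \<subseteq> polar_cone (M -` K)"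
    unfolding polar_cone_def by (auto simp: adjoint_clauses(2)[OF M(1)])
next
  obtain R where R: "linear R" "M \<circ> R = id"
    using linear_surjective_right_inverse[OF M] by blast
  show "polar_cone (M -` K) \<subseteq> adjoint M ` polar_cone K"
  proof
    fix y assume y: "y \<in> polar_cone (M -` K)"
    have MR: "\<And>z. M (R z) = z" using R(2) by (simp add: pointfree_idE)
    have "adjoint M (adjoint R y) = y"
      by (rule adjoint_right_inverse_orthogonal_kernel[OF M(1) R(1) MR polar_cone_orthogonal_kernel[OF M(1) K y]])
    moreover have "adjoint R y \<in> polar_cone K"
      unfolding polar_cone_def
    proof (intro CollectI ballI)
      fix k assume "k \<in> K"
      then have "y \<bullet> R k \<le> 0" using y MR unfolding polar_cone_def by simp
      then show "adjoint R y \<bullet> k \<le> 0" by (simp add: adjoint_clauses(2)[OF R(1)])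
    qed
    ultimately show "y \<in> adjoint M ` polar_cone K" by (metis image_eqI)
  qed
qed

definition pullback_cone :: "('a::euclidean_space \<Rightarrow> 'c::euclidean_space) \<Rightarrow> ('a \<Rightarrow> 'a) \<Rightarrow> ('c \<times> 'c) set \<Rightarrow> ('a \<times> 'a) set"
  where "pullback_cone L H T = {(v, H v + adjoint L \<nu>) | v \<nu>. (L v, \<nu>) \<in> T}"

lemma polar_cone_pullback_cone_iff:
  fixes L :: "'a::euclidean_space \<Rightarrow> 'c::euclidean_space"
  assumes L: "linear L" and H: "\<And>v w. w \<bullet> H v = H w \<bullet> v"
  shows "(u, -w) \<in> polar_cone (pullback_cone L H T)
      \<longleftrightarrow> (\<forall>v \<nu>. (L v, \<nu>) \<in> T \<longrightarrow> (u - H w) \<bullet> v - L w \<bullet> \<nu> \<le> 0)"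
proof -
  have ip: "(u, -w) \<bullet> (v, H v + adjoint L \<nu>) = (u - H w) \<bullet> v - L w \<bullet> \<nu>" for v \<nu>
    using H[of w v] by (simp add: inner_add_right inner_diff_left adjoint_clauses(1)[OF L] linear_neg[OF L])
  show ?thesis
  proof (intro iffI allI impI)
    fix v \<nu> assume "(u, -w) \<in> polar_cone (pullback_cone L H T)" "(L v, \<nu>) \<in> T"
    then have "(u, -w) \<bullet> (v, H v + adjoint L \<nu>) \<le> 0"
      unfolding polar_cone_def pullback_cone_def by blast
    then show "(u - H w) \<bullet> v - L w \<bullet> \<nu> \<le> 0" by (simp only: ip)
  next
    assume "\<forall>v \<nu>. (L v, \<nu>) \<in> T \<longrightarrow> (u - H w) \<bullet> v - L w \<bullet> \<nu> \<le> 0"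
    then show "(u, -w) \<in> polar_cone (pullback_cone L H T)"
      unfolding polar_cone_def pullback_cone_def by (auto simp only: ip)
  qed
qed

lemma polar_cone_pullback_cone_slice:
  fixes L :: "'a::euclidean_space \<Rightarrow> 'c::euclidean_space"
  assumes L: "linear L" "surj L" and H: "\<And>v w. w \<bullet> H v = H w \<bullet> v" and T: "(0, 0) \<in> T"
  shows "{u. (u, -w) \<in> polar_cone (pullback_cone L H T)}
       = {H w + adjoint L \<eta> | \<eta>. (\<eta>, - L w) \<in> polar_cone T}"
proof (intro set_eqI iffI)
  fix u assume "u \<in> {u. (u, -w) \<in> polar_cone (pullback_cone L H T)}"
  then have P: "\<And>v \<nu>. (L v, \<nu>) \<in> T \<Longrightarrow> (u - H w) \<bullet> v - L w \<bullet> \<nu> \<le> 0"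
    using polar_cone_pullback_cone_iff[OF L(1) H] by blast
  obtain R where R: "linear R" "L \<circ> R = id"
    using linear_surjective_right_inverse[OF L] by blast
  have LR: "\<And>z. L (R z) = z" using R(2) by (simp add: pointfree_idE)
  have "(u - H w) \<bullet> v = 0" if "L v = 0" for v
    using P[of v 0] P[of "-v" 0] T that L(1) by (simp add: linear_neg)
  then have eq: "adjoint L (adjoint R (u - H w)) = u - H w"
    by (rule adjoint_right_inverse_orthogonal_kernel[OF L(1) R(1) LR])
  have "(adjoint R (u - H w), - L w) \<in> polar_cone T"
    unfolding polar_cone_def
  proof (intro CollectI ballI)
    fix p assume "p \<in> T"
    moreover obtain a \<nu> where p: "p = (a, \<nu>)" by force
    ultimately have "(u - H w) \<bullet> R a - L w \<bullet> \<nu> \<le> 0"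
      using P[of "R a" \<nu>] LR by simp
    then show "(adjoint R (u - H w), - L w) \<bullet> p \<le> 0"
      using p by (simp add: adjoint_clauses(2)[OF R(1)])
  qed
  then show "u \<in> {H w + adjoint L \<eta> | \<eta>. (\<eta>, - L w) \<in> polar_cone T}"
    using eq by (intro CollectI exI[of _ "adjoint R (u - H w)"]) simp
next
  fix u assume "u \<in> {H w + adjoint L \<eta> | \<eta>. (\<eta>, - L w) \<in> polar_cone T}"
  then obtain \<eta> where \<eta>: "(\<eta>, - L w) \<in> polar_cone T" "u = H w + adjoint L \<eta>" by blast
  have "(u - H w) \<bullet> v - L w \<bullet> \<nu> \<le> 0" if "(L v, \<nu>) \<in> T" for v \<nu>
    using \<eta> that unfolding polar_cone_def by (force simp: adjoint_clauses(2)[OF L(1)])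
  then show "u \<in> {u. (u, -w) \<in> polar_cone (pullback_cone L H T)}"
    using polar_cone_pullback_cone_iff[OF L(1) H] by blast
qed

section \<open>Second differences\<close>

lemma tendstoI_le_scaled:
  fixes f :: "'x \<Rightarrow> 'b::metric_space"
  assumes K: "K \<ge> 0" and ev: "\<And>e. e > 0 \<Longrightarrow> eventually (\<lambda>x. dist (f x) l \<le> e * K) F"
  shows "(f \<longlongrightarrow> l) F"
proof (rule tendstoI)
  fix \<epsilon> :: real assume \<epsilon>: "\<epsilon> > 0"
  have "\<epsilon> / (K + 1) * K < \<epsilon>"
    using \<epsilon> K by (simp add: field_simps)
  then show "eventually (\<lambda>x. dist (f x) l < \<epsilon>) F"
    using ev[of "\<epsilon> / (K + 1)"] \<epsilon> K by (auto elim: eventually_mono)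
qed

lemma inner_second_difference_mean_value:
  fixes F :: "'a::real_normed_vector \<Rightarrow> 'c::real_inner"
  assumes F: "\<And>x. (F has_derivative F' x) (at x)" and t: "0 < t"
  obtains r where "0 < r" "r < t"
    "\<mu> \<bullet> (F (x + t *\<^sub>R v + t *\<^sub>R w) - F (x + t *\<^sub>R v) - F (x + t *\<^sub>R w) + F x)
       = t * (\<mu> \<bullet> (F' (x + t *\<^sub>R v + r *\<^sub>R w) w - F' (x + r *\<^sub>R w) w))"
proof -
  define \<psi> where "\<psi> r = \<mu> \<bullet> (F (x + t *\<^sub>R v + r *\<^sub>R w) - F (x + r *\<^sub>R w))" for r
  define \<psi>' where "\<psi>' r = \<mu> \<bullet> (F' (x + t *\<^sub>R v + r *\<^sub>R w) w - F' (x + r *\<^sub>R w) w)" for r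
  have "(\<psi> has_real_derivative \<psi>' r) (at r)" for r
  proof -
    have lin: "linear (F' y)" for y
      using F by (simp add: has_derivative_at bounded_linear.linear)
    have "((\<lambda>r. F (y + r *\<^sub>R w)) has_derivative (\<lambda>h. F' (y + r *\<^sub>R w) (h *\<^sub>R w))) (at r)" for y
      by (rule has_derivative_compose[OF _ F]) (auto intro!: derivative_eq_intros)
    then have "(\<psi> has_derivative (\<lambda>h. \<mu> \<bullet> (F' (x + t *\<^sub>R v + r *\<^sub>R w) (h *\<^sub>R w) - F' (x + r *\<^sub>R w) (h *\<^sub>R w)))) (at r)"
      unfolding \<psi>_def add.assoc[symmetric]
      by (intro bounded_linear.has_derivative[OF bounded_linear_inner_right] has_derivative_diff)
    moreover have "(\<lambda>h. \<mu> \<bullet> (F' (x + t *\<^sub>R v + r *\<^sub>R w) (h *\<^sub>R w) - F' (x + r *\<^sub>R w) (h *\<^sub>R w))) = (*) (\<psi>' r)"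
      unfolding \<psi>'_def by (auto simp: linear_scale[OF lin] algebra_simps)
    ultimately show ?thesis unfolding has_field_derivative_def by simp
  qed
  then obtain r where "0 < r" "r < t" "\<psi> t - \<psi> 0 = (t - 0) * \<psi>' r"
    using MVT2[OF t] by blast
  then show thesis
    by (intro that[of r]) (simp_all add: \<psi>_def \<psi>'_def inner_diff_right inner_add_right)
qed

lemma has_derivative_increment_bound:
  fixes G :: "'a::real_normed_vector \<Rightarrow> 'b::real_normed_vector"
  assumes G: "(G has_derivative G') (at x)" and e: "e > 0"
  obtains \<delta> where "\<delta> > 0" "\<And>y z. norm (y - x) < \<delta> \<Longrightarrow> norm (z - x) < \<delta> \<Longrightarrow>
      norm (G y - G z - G' (y - z)) \<le> e * (norm (y - x) + norm (z - x))"
proof -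
  obtain \<delta> where \<delta>: "\<delta> > 0" "\<And>y. norm (y - x) < \<delta> \<Longrightarrow> norm (G y - G x - G' (y - x)) \<le> e * norm (y - x)"
    using G e unfolding has_derivative_at_alt by blast
  have lin: "linear G'" using G by (simp add: has_derivative_at_alt bounded_linear.linear)
  show thesis
  proof (rule that[OF \<delta>(1)])
    fix y z assume "norm (y - x) < \<delta>" "norm (z - x) < \<delta>"
    moreover have "G y - G z - G' (y - z) = (G y - G x - G' (y - x)) - (G z - G x - G' (z - x))"
      using linear_diff[OF lin, of "y - x" "z - x"] by (simp add: algebra_simps)
    ultimately show "norm (G y - G z - G' (y - z)) \<le> e * (norm (y - x) + norm (z - x))"
      using \<delta>(2)[of y] \<delta>(2)[of z] norm_triangle_ineq4 by (smt (verit) distrib_left)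
  qed
qed

section \<open>Submersions\<close>

text \<open>A sequential form of the Lyusternik--Graves property of \<open>F\<close> at \<open>x\<close>, with derivative \<open>T\<close>.\<close>

definition tangent_lifting :: "('a::real_normed_vector \<Rightarrow> 'c::real_normed_vector) \<Rightarrow> ('a \<Rightarrow> 'c) \<Rightarrow> 'a \<Rightarrow> bool"
  where "tangent_lifting F T x \<longleftrightarrow> (\<forall>v t a. (\<forall>k. 0 < t k) \<and> t \<longlonglongrightarrow> 0 \<and> a \<longlonglongrightarrow> T v \<longrightarrow>
     (\<exists>xs. eventually (\<lambda>k. F (xs k) = F x + t k *\<^sub>R a k) sequentially
          \<and> (\<lambda>k. inverse (t k) *\<^sub>R (xs k - x)) \<longlonglongrightarrow> v))"

lemma tangent_lifting_local_inverse:
  fixes \<Phi> :: "'a::euclidean_space \<Rightarrow> 'a" and L :: "'a \<Rightarrow> 'c::euclidean_space"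
  assumes L: "linear L" "surj L"
    and F: "\<And>y. F y = L (\<Phi> y)" and T: "\<And>v. T v = L (\<Phi>' v)"
    and V: "open V" "\<Phi> x \<in> V" and G: "\<And>y. y \<in> V \<Longrightarrow> \<Phi> (G y) = y" "G (\<Phi> x) = x"
    and G': "(G has_derivative G') (at (\<Phi> x))" "\<And>v. G' (\<Phi>' v) = v"
  shows "tangent_lifting F T x"
  unfolding tangent_lifting_def
proof (intro allI impI, elim conjE)
  fix v a and t :: "nat \<Rightarrow> real"
  assume t: "\<forall>k. 0 < t k" "t \<longlonglongrightarrow> 0" and a: "a \<longlonglongrightarrow> T v"
  obtain R where R: "linear R" "L \<circ> R = id"
    using linear_surjective_right_inverse[OF L] by blast
  have LR: "\<And>z. L (R z) = z" using R(2) by (simp add: pointfree_idE)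
  define d where "d k = \<Phi>' v + R (a k - T v)" for k
  have "bounded_linear R" using R(1) by (simp add: linear_conv_bounded_linear)
  moreover have "(\<lambda>k. a k - T v) \<longlonglongrightarrow> 0" using a by (rule LIM_zero)
  ultimately have "(\<lambda>k. R (a k - T v)) \<longlonglongrightarrow> R 0" by (rule bounded_linear.tendsto)
  then have d: "d \<longlonglongrightarrow> \<Phi>' v"
    unfolding d_def using tendsto_add[OF tendsto_const, of _ 0 sequentially "\<Phi>' v"] linear_0[OF R(1)]
    by simp
  define xs where "xs k = G (\<Phi> x + t k *\<^sub>R d k)" for k
  have "(\<lambda>k. \<Phi> x + t k *\<^sub>R d k) \<longlonglongrightarrow> \<Phi> x + 0 *\<^sub>R \<Phi>' v"
    by (intro tendsto_intros t d)
  then have "eventually (\<lambda>k. \<Phi> x + t k *\<^sub>R d k \<in> V) sequentially"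
    using V by (simp add: topological_tendstoD)
  then have "eventually (\<lambda>k. F (xs k) = F x + t k *\<^sub>R a k) sequentially"
  proof eventually_elim
    case (elim k)
    then have "F (xs k) = L (\<Phi> x) + t k *\<^sub>R L (d k)"
      unfolding xs_def F by (simp add: G(1) linear_add[OF L(1)] linear_scale[OF L(1)])
    also have "L (d k) = a k"
      unfolding d_def T by (simp add: linear_add[OF L(1)] LR)
    finally show ?case by (simp add: F)
  qed
  moreover have "(\<lambda>k. inverse (t k) *\<^sub>R (xs k - x)) \<longlonglongrightarrow> v"
    using tendsto_difference_quotient[OF G'(1) t d] unfolding xs_def G'(2) G(2) .
  ultimately show "\<exists>xs. eventually (\<lambda>k. F (xs k) = F x + t k *\<^sub>R a k) sequentially
      \<and> (\<lambda>k. inverse (t k) *\<^sub>R (xs k - x)) \<longlonglongrightarrow> v"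
    by blast
qed

lemma tangent_cone_preimage_subset:
  fixes F :: "'a::real_normed_vector \<Rightarrow> 'c::real_normed_vector"
  assumes F: "tangent_lifting F T x" and A: "\<forall>\<^sub>F y in nhds x. F y \<in> \<Theta> \<longrightarrow> y \<in> A"
    and v: "T v \<in> tangent_cone \<Theta> (F x)"
  shows "v \<in> tangent_cone A x"
proof -
  obtain t a where t: "\<forall>k. t k > (0::real)" "t \<longlonglongrightarrow> 0" and a: "a \<longlonglongrightarrow> T v"
    and mem: "\<forall>k. F x + t k *\<^sub>R a k \<in> \<Theta>"
    using v unfolding tangent_cone_def by blast
  obtain xs where ev: "\<forall>\<^sub>F k in sequentially. F (xs k) = F x + t k *\<^sub>R a k"
    and q: "(\<lambda>k. inverse (t k) *\<^sub>R (xs k - x)) \<longlonglongrightarrow> v"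
    using F t a unfolding tangent_lifting_def by blast
  have xs: "xs k = x + t k *\<^sub>R (inverse (t k) *\<^sub>R (xs k - x))" for k
    using t(1) by (simp add: less_imp_neq[symmetric])
  have "(\<lambda>k. x + t k *\<^sub>R (inverse (t k) *\<^sub>R (xs k - x))) \<longlonglongrightarrow> x + 0 *\<^sub>R v"
    by (intro tendsto_intros t q)
  then have "\<forall>\<^sub>F k in sequentially. F (xs k) \<in> \<Theta> \<longrightarrow> xs k \<in> A"
    using eventually_compose_filterlim[OF A] xs[symmetric] by simp
  with ev have "\<forall>\<^sub>F k in sequentially. x + t k *\<^sub>R (inverse (t k) *\<^sub>R (xs k - x)) \<in> A"
    by eventually_elim (use mem xs in metis)
  then show ?thesis by (rule tangent_coneI_eventually[OF t q])
qed

locale submersion_at =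
  fixes F :: "'a::euclidean_space \<Rightarrow> 'c::euclidean_space"
    and F' :: "'a \<Rightarrow> ('a \<Rightarrow>\<^sub>L 'c)"
    and F'' :: "'a \<Rightarrow> ('a \<Rightarrow>\<^sub>L 'c)"
    and x0 :: 'a
  assumes has_derivative_F: "\<And>x. (F has_derivative F' x) (at x)"
    and has_derivative_F': "(F' has_derivative F'') (at x0)"
    and continuous_F': "continuous_on UNIV F'"
    and surj_F': "surj (F' x0)"
begin

lemma straightening:
  obtains \<Phi> :: "'a \<Rightarrow> 'a" and \<Phi>' :: "'a \<Rightarrow> ('a \<Rightarrow>\<^sub>L 'a)"
  where "\<And>x. F x = F' x0 (\<Phi> x)" "\<And>x v. F' x v = F' x0 (\<Phi>' x v)"
    "\<And>x. (\<Phi> has_derivative \<Phi>' x) (at x)" "continuous_on UNIV \<Phi>'" "\<Phi>' x0 = id_blinfun"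
proof -
  obtain R where R: "linear R" "F' x0 \<circ> R = id"
    using linear_surjective_right_inverse[OF linear_blinfun_apply surj_F'] by blast
  have LR: "\<And>z. F' x0 (R z) = z" using R(2) by (simp add: pointfree_idE)
  have blR: "bounded_linear R" using R(1) by (simp add: linear_conv_bounded_linear)
  then have R_apply: "blinfun_apply (Blinfun R) = R" by (rule bounded_linear_Blinfun_apply)
  define \<Phi> where "\<Phi> = (\<lambda>x. x + R (F x - F' x0 x))"
  define \<Phi>' where "\<Phi>' x = id_blinfun + (Blinfun R o\<^sub>L (F' x - F' x0))" for x
  show thesis
  proof
    show "F x = F' x0 (\<Phi> x)" for x
      unfolding \<Phi>_def by (simp add: blinfun.add_right LR)
    show "F' x v = F' x0 (\<Phi>' x v)" for x v
      unfolding \<Phi>'_def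
      by (simp add: R_apply plus_blinfun.rep_eq minus_blinfun.rep_eq blinfun.add_right blinfun.diff_left LR)
    show "(\<Phi> has_derivative \<Phi>' x) (at x)" for x
    proof -
      have "((\<lambda>x. F x - F' x0 x) has_derivative (\<lambda>h. F' x h - F' x0 h)) (at x)"
        by (rule has_derivative_diff[OF has_derivative_F
              bounded_linear.has_derivative[OF blinfun.bounded_linear_right has_derivative_ident]])
      then have "((\<lambda>x. R (F x - F' x0 x)) has_derivative (\<lambda>h. R (F' x h - F' x0 h))) (at x)"
        by (rule bounded_linear.has_derivative[OF blR])
      then have "(\<Phi> has_derivative (\<lambda>h. h + R (F' x h - F' x0 h))) (at x)"
        unfolding \<Phi>_def by (rule has_derivative_add[OF has_derivative_ident])
      moreover have "(\<lambda>h. h + R (F' x h - F' x0 h)) = \<Phi>' x"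
        by (auto simp: \<Phi>'_def R_apply plus_blinfun.rep_eq minus_blinfun.rep_eq)
      ultimately show ?thesis by simp
    qed
    show "continuous_on UNIV \<Phi>'"
      unfolding \<Phi>'_def by (intro continuous_intros continuous_F')
    show "\<Phi>' x0 = id_blinfun"
      unfolding \<Phi>'_def by simp
  qed
qed

lemma lyusternik: "\<forall>\<^sub>F x in nhds x0. surj (F' x) \<and> tangent_lifting F (F' x) x"
proof -
  obtain \<Phi> and \<Phi>' :: "'a \<Rightarrow> ('a \<Rightarrow>\<^sub>L 'a)" where \<Phi>: "\<And>x. F x = F' x0 (\<Phi> x)" "\<And>x v. F' x v = F' x0 (\<Phi>' x v)"
    and der\<Phi>: "\<And>x. (\<Phi> has_derivative \<Phi>' x) (at x)" and cont\<Phi>': "continuous_on UNIV \<Phi>'"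
    and \<Phi>'0: "\<Phi>' x0 = id_blinfun"
    using straightening by blast
  obtain U V G G' where U: "open U" "U \<subseteq> UNIV" "x0 \<in> U" and V: "open V" "\<Phi> x0 \<in> V"
    and hom: "homeomorphism U V \<Phi> G"
    and G: "\<And>y. y \<in> V \<Longrightarrow> (G has_derivative G' y) (at y)"
    and G': "\<And>y. y \<in> V \<Longrightarrow> G' y = inv (\<Phi>' (G y))"
    and bij: "\<And>y. y \<in> V \<Longrightarrow> bij (\<Phi>' (G y))"
    by (rule inverse_function_theorem[of UNIV \<Phi> \<Phi>' x0 id_blinfun]) (use der\<Phi> cont\<Phi>' \<Phi>'0 in \<open>auto intro: blinfun_eqI\<close>)
  have "surj (F' x) \<and> tangent_lifting F (F' x) x" if x: "x \<in> U" for x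
  proof
    have \<Phi>x: "\<Phi> x \<in> V" "G (\<Phi> x) = x" and \<Phi>G: "\<And>y. y \<in> V \<Longrightarrow> \<Phi> (G y) = y"
      using hom x unfolding homeomorphism_def by auto
    have bij_x: "bij (\<Phi>' x)" using bij[OF \<Phi>x(1)] \<Phi>x(2) by simp
    have "blinfun_apply (F' x) = F' x0 \<circ> \<Phi>' x" using \<Phi>(2) by auto
    then show "surj (F' x)" using comp_surj[OF bij_is_surj[OF bij_x] surj_F'] by simp
    have "G' (\<Phi> x) = inv (\<Phi>' x)" using G'[OF \<Phi>x(1)] \<Phi>x(2) by simp
    then have "G' (\<Phi> x) (\<Phi>' x v) = v" for v using bij_is_inj[OF bij_x] by (simp add: inv_f_f)
    then show "tangent_lifting F (F' x) x"
      using tangent_lifting_local_inverse[of "F' x0" F \<Phi> "F' x" "\<Phi>' x" V x G "G' (\<Phi> x)",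
          OF linear_blinfun_apply surj_F' \<Phi> V(1) \<Phi>x(1)
          \<Phi>G \<Phi>x(2) G[OF \<Phi>x(1)]]
      by blast
  qed
  then show ?thesis using U(1,3) by (auto simp: eventually_nhds)
qed

definition second_difference :: "'c \<Rightarrow> 'a \<Rightarrow> 'a \<Rightarrow> real \<Rightarrow> real"
  where "second_difference \<mu> v w t = \<mu> \<bullet> (F (x0 + t *\<^sub>R v + t *\<^sub>R w) - F (x0 + t *\<^sub>R v) - F (x0 + t *\<^sub>R w) + F x0)"

lemma second_difference_commute: "second_difference \<mu> v w t = second_difference \<mu> w v t"
  unfolding second_difference_def by (simp add: algebra_simps)

lemma second_difference_quotient_bound:
  assumes D: "\<And>y z. norm (y - x0) < \<delta> \<Longrightarrow> norm (z - x0) < \<delta> \<Longrightarrow>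
      norm (F' y - F' z - F'' (y - z)) \<le> e * (norm (y - x0) + norm (z - x0))"
    and t: "0 < t" "t * (norm v + norm w) < \<delta>" and e: "0 \<le> e"
  shows "dist (second_difference \<mu> v w t / t\<^sup>2) (\<mu> \<bullet> F'' v w) \<le> e * (norm \<mu> * (norm v + 2 * norm w) * norm w)"
proof -
  have lin: "linear F''" using has_derivative_F' by (simp add: has_derivative_at bounded_linear.linear)
  obtain r where r: "0 < r" "r < t" and \<Delta>:
    "second_difference \<mu> v w t = t * (\<mu> \<bullet> (F' (x0 + t *\<^sub>R v + r *\<^sub>R w) w - F' (x0 + r *\<^sub>R w) w))"
    using inner_second_difference_mean_value[OF has_derivative_F t(1)] unfolding second_difference_def by blast
  define B where "B = F' (x0 + t *\<^sub>R v + r *\<^sub>R w) - F' (x0 + r *\<^sub>R w) - t *\<^sub>R F'' v"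
  have n1: "norm (t *\<^sub>R v + r *\<^sub>R w) \<le> t * (norm v + norm w)"
    using t r norm_triangle_ineq[of "t *\<^sub>R v" "r *\<^sub>R w"] mult_right_mono[of r t "norm w"]
    by (simp add: algebra_simps)
  have n2: "norm (r *\<^sub>R w) \<le> t * norm w"
    using r by (simp add: mult_right_mono)
  have "t * norm w \<le> t * (norm v + norm w)" using t(1) by simp
  then have "norm (x0 + t *\<^sub>R v + r *\<^sub>R w - x0) < \<delta>" "norm (x0 + r *\<^sub>R w - x0) < \<delta>"
    using n1 n2 t(2) by simp_all
  moreover have "B = F' (x0 + t *\<^sub>R v + r *\<^sub>R w) - F' (x0 + r *\<^sub>R w)
      - F'' ((x0 + t *\<^sub>R v + r *\<^sub>R w) - (x0 + r *\<^sub>R w))"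
    by (simp add: B_def linear_scale[OF lin])
  ultimately have "norm B \<le> e * (norm (t *\<^sub>R v + r *\<^sub>R w) + norm (r *\<^sub>R w))"
    using D[of "x0 + t *\<^sub>R v + r *\<^sub>R w" "x0 + r *\<^sub>R w"] by (simp add: add.assoc)
  also have "\<dots> \<le> e * (t * (norm v + norm w) + t * norm w)"
    using n1 n2 e by (intro mult_left_mono add_mono) auto
  finally have nB: "norm B \<le> t * (e * (norm v + 2 * norm w))"
    by (simp add: algebra_simps)
  have "\<bar>\<mu> \<bullet> B w\<bar> \<le> norm \<mu> * (norm B * norm w)"
    by (metis Cauchy_Schwarz_ineq2 norm_blinfun mult_left_mono norm_ge_zero order_trans)
  also have "\<dots> \<le> norm \<mu> * (t * (e * (norm v + 2 * norm w)) * norm w)"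
    using nB by (intro mult_left_mono mult_right_mono) auto
  finally have "\<bar>\<mu> \<bullet> B w\<bar> / t \<le> e * (norm \<mu> * (norm v + 2 * norm w) * norm w)"
    using t by (simp add: divide_le_eq algebra_simps)
  moreover have "second_difference \<mu> v w t / t\<^sup>2 - \<mu> \<bullet> F'' v w = (\<mu> \<bullet> B w) / t"
    using t unfolding \<Delta> B_def
    by (simp add: power2_eq_square field_simps blinfun.diff_left blinfun.add_left blinfun.scaleR_left
        inner_diff_right inner_add_right)
  ultimately show ?thesis using t by (simp add: dist_real_def)
qed

lemma tendsto_second_difference_quotient:
  "((\<lambda>t. second_difference \<mu> v w t / t\<^sup>2) \<longlongrightarrow> \<mu> \<bullet> F'' v w) (at_right 0)"
proof (rule tendstoI_le_scaled[where K = "norm \<mu> * (norm v + 2 * norm w) * norm w"])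
  fix e :: real assume e: "e > 0"
  obtain \<delta> where \<delta>: "\<delta> > 0" and D: "\<And>y z. norm (y - x0) < \<delta> \<Longrightarrow> norm (z - x0) < \<delta> \<Longrightarrow>
      norm (F' y - F' z - F'' (y - z)) \<le> e * (norm (y - x0) + norm (z - x0))"
    using has_derivative_increment_bound[OF has_derivative_F' e] by blast
  define c where "c = norm v + norm w + 1"
  have c: "c > 0" unfolding c_def by (simp add: add_nonneg_pos)
  have "t * (norm v + norm w) < \<delta>" if "0 < t" "t < \<delta> / c" for t
    using that c by (simp add: c_def field_simps)
  then show "\<forall>\<^sub>F t in at_right 0. dist (second_difference \<mu> v w t / t\<^sup>2) (\<mu> \<bullet> F'' v w)
      \<le> e * (norm \<mu> * (norm v + 2 * norm w) * norm w)"
    unfolding eventually_at_right_field using \<delta> c e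
    by (intro exI[of _ "\<delta> / c"]) (auto intro!: second_difference_quotient_bound[OF D])
qed simp

lemma inner_second_derivative_symmetric: "\<mu> \<bullet> F'' v w = \<mu> \<bullet> F'' w v"
  using tendsto_unique[OF trivial_limit_at_right_real tendsto_second_difference_quotient[of \<mu> v w]]
    tendsto_second_difference_quotient[of \<mu> w v] by (simp add: second_difference_commute)

lemma tendsto_adjoint_difference_quotient:
  assumes t: "\<forall>k. 0 < t k" "t \<longlonglongrightarrow> 0" and q: "q \<longlonglongrightarrow> v" and b: "b \<longlonglongrightarrow> \<nu>"
  shows "(\<lambda>k. inverse (t k) *\<^sub>R (adjoint (F' (x0 + t k *\<^sub>R q k)) (\<mu> + t k *\<^sub>R b k) - adjoint (F' x0) \<mu>))
      \<longlonglongrightarrow> adjoint (F'' v) \<mu> + adjoint (F' x0) \<nu>"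
proof -
  define Q where "Q k = inverse (t k) *\<^sub>R (F' (x0 + t k *\<^sub>R q k) - F' x0)" for k
  have "Q \<longlonglongrightarrow> F'' v"
    unfolding Q_def using tendsto_difference_quotient[OF has_derivative_F' t q] by simp
  moreover have "(\<lambda>k. x0 + t k *\<^sub>R q k) \<longlonglongrightarrow> x0 + 0 *\<^sub>R v"
    by (intro tendsto_intros t q)
  then have "(\<lambda>k. F' (x0 + t k *\<^sub>R q k)) \<longlonglongrightarrow> F' x0"
    using continuous_F' isCont_tendsto_compose[of x0 F'] by (simp add: continuous_on_eq_continuous_at)
  ultimately have "(\<lambda>k. adjoint (Q k) \<mu> + adjoint (F' (x0 + t k *\<^sub>R q k)) (b k))
      \<longlonglongrightarrow> adjoint (F'' v) \<mu> + adjoint (F' x0) \<nu>"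
    by (intro tendsto_add tendsto_adjoint_blinfun b tendsto_const)
  moreover have "adjoint (Q k) \<mu> + adjoint (F' (x0 + t k *\<^sub>R q k)) (b k)
      = inverse (t k) *\<^sub>R (adjoint (F' (x0 + t k *\<^sub>R q k)) (\<mu> + t k *\<^sub>R b k) - adjoint (F' x0) \<mu>)" for k
  proof -
    have tk: "t k \<noteq> 0" using t(1) by (metis less_irrefl)
    show ?thesis
      using adjoint_blinfun_eq_add_quotient[OF tk, of "F' (x0 + t k *\<^sub>R q k)" \<mu> "F' x0"] tk
      by (simp add: Q_def linear_add[OF linear_adjoint_blinfun] linear_scale[OF linear_adjoint_blinfun]
          scaleR_add_right)
  qed
  ultimately show ?thesis by simp
qed

end

section \<open>Preimages under submersions\<close>

lemma surj_comp_of_transversal: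
  fixes L :: "'b::real_vector \<Rightarrow> 'c::real_vector"
  assumes L: "linear L" "surj L" and transversal: "{a + b | a b. a \<in> range M \<and> L b = 0} = UNIV"
  shows "surj (L \<circ> M)"
  unfolding surj_def
proof
  fix d
  obtain z where "L z = d" using L(2) by (metis surjD)
  moreover obtain u b where "z = M u + b" "L b = 0" using transversal by blast
  ultimately show "\<exists>u. d = (L \<circ> M) u" using linear_add[OF L(1)] by auto
qed

locale submersion_constraint = submersion_at F F' F'' x0
  for F :: "'a::euclidean_space \<Rightarrow> 'c::euclidean_space" and F' F'' x0 +
  fixes \<Theta> :: "'c set" and A :: "'a set" and U :: "'a set"
  assumes open_U: "open U" and x0_in_U: "x0 \<in> U" and A_local: "A \<inter> U = {x \<in> U. F x \<in> \<Theta>}"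
begin

lemma eventually_mem_iff: "x \<in> U \<Longrightarrow> \<forall>\<^sub>F y in nhds x. y \<in> A \<longleftrightarrow> F y \<in> \<Theta>"
  unfolding eventually_nhds using open_U A_local by blast

lemma reg_normal_cone_preimage:
  "\<forall>\<^sub>F x in nhds x0. reg_normal_cone A x = adjoint (F' x) ` reg_normal_cone \<Theta> (F x)"
proof -
  have "reg_normal_cone A x = adjoint (F' x) ` reg_normal_cone \<Theta> (F x)"
    if x: "x \<in> U" and surj: "surj (F' x)" and lift: "tangent_lifting F (F' x) x" for x
  proof (cases "x \<in> A")
    case True
    then have Fx: "F x \<in> \<Theta>" using A_local x by blast
    have "\<forall>\<^sub>F y in nhds x. y \<in> A \<longrightarrow> F y \<in> \<Theta>" "\<forall>\<^sub>F y in nhds x. F y \<in> \<Theta> \<longrightarrow> y \<in> A"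
      using eventually_mem_iff[OF x] by (auto elim: eventually_mono)
    then have "tangent_cone A x = F' x -` tangent_cone \<Theta> (F x)"
      using tangent_cone_image_subset[OF has_derivative_F] tangent_cone_preimage_subset[OF lift] by blast
    then show ?thesis
      using True Fx polar_cone_linear_preimage[OF linear_blinfun_apply surj zero_in_tangent_cone[OF Fx]]
      unfolding reg_normal_cone_def by simp
  next
    case False
    then have "F x \<notin> \<Theta>" using A_local x by blast
    with False show ?thesis unfolding reg_normal_cone_def by simp
  qed
  note local = this
  have "\<forall>\<^sub>F x in nhds x0. x \<in> U"
    using open_U x0_in_U by (rule eventually_nhds_in_open)
  then show ?thesis
    using lyusternik by eventually_elim (use local in blast)
qed

lemma pullback_cone_subset_tangent_cone_graph:
  "pullback_cone (F' x0) (\<lambda>v. adjoint (F'' v) \<mu>) (tangent_cone (graph_mf (reg_normal_cone \<Theta>)) (F x0, \<mu>))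
     \<subseteq> tangent_cone (graph_mf (reg_normal_cone A)) (x0, adjoint (F' x0) \<mu>)"
proof
  fix p assume "p \<in> pullback_cone (F' x0) (\<lambda>v. adjoint (F'' v) \<mu>) (tangent_cone (graph_mf (reg_normal_cone \<Theta>)) (F x0, \<mu>))"
  then obtain v \<nu> where p: "p = (v, adjoint (F'' v) \<mu> + adjoint (F' x0) \<nu>)"
    and "(F' x0 v, \<nu>) \<in> tangent_cone (graph_mf (reg_normal_cone \<Theta>)) (F x0, \<mu>)"
    unfolding pullback_cone_def by blast
  then obtain t u where t: "\<forall>k. t k > (0::real)" "t \<longlonglongrightarrow> 0" and u: "u \<longlonglongrightarrow> (F' x0 v, \<nu>)"
    and mem: "\<forall>k. (F x0, \<mu>) + t k *\<^sub>R u k \<in> graph_mf (reg_normal_cone \<Theta>)"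
    unfolding tangent_cone_def by blast
  define a where "a k = fst (u k)" for k
  define b where "b k = snd (u k)" for k
  have a: "a \<longlonglongrightarrow> F' x0 v" and b: "b \<longlonglongrightarrow> \<nu>"
    unfolding a_def b_def using tendsto_fst[OF u] tendsto_snd[OF u] by simp_all
  have "tangent_lifting F (F' x0) x0"
    using eventually_nhds_x_imp_x[OF lyusternik] by blast
  then obtain xs where evF: "\<forall>\<^sub>F k in sequentially. F (xs k) = F x0 + t k *\<^sub>R a k"
    and q: "(\<lambda>k. inverse (t k) *\<^sub>R (xs k - x0)) \<longlonglongrightarrow> v"
    using t a unfolding tangent_lifting_def by blast
  define q where "q k = inverse (t k) *\<^sub>R (xs k - x0)" for k
  have q: "q \<longlonglongrightarrow> v" using q unfolding q_def .
  have xs: "xs k = x0 + t k *\<^sub>R q k" for k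
    using t(1) by (simp add: q_def less_imp_neq[symmetric])
  have "(\<lambda>k. x0 + t k *\<^sub>R q k) \<longlonglongrightarrow> x0 + 0 *\<^sub>R v"
    by (intro tendsto_intros t q)
  then have "\<forall>\<^sub>F k in sequentially. reg_normal_cone A (xs k) = adjoint (F' (xs k)) ` reg_normal_cone \<Theta> (F (xs k))"
    using eventually_compose_filterlim[OF reg_normal_cone_preimage] by (simp add: xs)
  then have "\<forall>\<^sub>F k in sequentially. (x0, adjoint (F' x0) \<mu>) + t k *\<^sub>R (q k,
      inverse (t k) *\<^sub>R (adjoint (F' (x0 + t k *\<^sub>R q k)) (\<mu> + t k *\<^sub>R b k) - adjoint (F' x0) \<mu>))
      \<in> graph_mf (reg_normal_cone A)"
    using evF
  proof eventually_elim
    case (elim k)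
    have "\<mu> + t k *\<^sub>R b k \<in> reg_normal_cone \<Theta> (F (xs k))"
      using mem[rule_format, of k] elim(2) unfolding graph_mf_def a_def b_def by (cases "u k") auto
    then show ?case
      using elim(1) t(1) unfolding graph_mf_def xs by (simp add: less_imp_neq[symmetric])
  qed
  then show "p \<in> tangent_cone (graph_mf (reg_normal_cone A)) (x0, adjoint (F' x0) \<mu>)"
    unfolding p
    by (rule tangent_coneI_eventually[OF t tendsto_Pair[OF q tendsto_adjoint_difference_quotient[OF t q b]]])
qed

lemma normal_multipliers_tendsto:
  assumes t: "\<forall>k. 0 < t k" "t \<longlonglongrightarrow> 0" and q: "q \<longlonglongrightarrow> v" and z: "z \<longlonglongrightarrow> y"
    and mem: "\<And>k. adjoint (F' x0) \<mu> + t k *\<^sub>R z k \<in> reg_normal_cone A (x0 + t k *\<^sub>R q k)"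
  obtains m \<nu> where "\<forall>\<^sub>F k in sequentially. m k \<in> reg_normal_cone \<Theta> (F (x0 + t k *\<^sub>R q k))"
    "(\<lambda>k. inverse (t k) *\<^sub>R (m k - \<mu>)) \<longlonglongrightarrow> \<nu>" "adjoint (F' x0) \<nu> = y - adjoint (F'' v) \<mu>"
proof -
  define x where "x k = x0 + t k *\<^sub>R q k" for k
  define P where "P k m \<longleftrightarrow> m \<in> reg_normal_cone \<Theta> (F (x k))
      \<and> adjoint (F' (x k)) m = adjoint (F' x0) \<mu> + t k *\<^sub>R z k" for k m
  have "x \<longlonglongrightarrow> x0 + 0 *\<^sub>R v" unfolding x_def by (intro tendsto_intros t q)
  then have "\<forall>\<^sub>F k in sequentially. reg_normal_cone A (x k) = adjoint (F' (x k)) ` reg_normal_cone \<Theta> (F (x k))"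
    using eventually_compose_filterlim[OF reg_normal_cone_preimage] by simp
  then have "\<forall>\<^sub>F k in sequentially. \<exists>m. P k m"
    by eventually_elim (use mem in \<open>force simp: P_def x_def\<close>)
  then have "\<forall>\<^sub>F k in sequentially. P k (SOME m. P k m)"
    by (rule eventually_mono) (rule someI_ex)
  moreover define m where "m k = (SOME m. P k m)" for k
  ultimately have m: "\<forall>\<^sub>F k in sequentially. m k \<in> reg_normal_cone \<Theta> (F (x k))
      \<and> adjoint (F' (x k)) (m k) = adjoint (F' x0) \<mu> + t k *\<^sub>R z k"
    unfolding P_def by simp
  have tk: "t k \<noteq> 0" for k using t(1) by (metis less_irrefl)
  define Q where "Q k = inverse (t k) *\<^sub>R (F' (x k) - F' x0)" for k
  have Q: "Q \<longlonglongrightarrow> F'' v"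
    using tendsto_difference_quotient[OF has_derivative_F' t q] unfolding Q_def x_def by simp
  from m have "\<forall>\<^sub>F k in sequentially. adjoint (F' x0) (m k - \<mu>) = t k *\<^sub>R (z k - adjoint (Q k) (m k))"
  proof eventually_elim
    case (elim k)
    then show ?case
      using adjoint_blinfun_eq_add_quotient[OF tk, of "F' (x k)" "m k" "F' x0"]
      by (simp add: Q_def linear_diff[OF linear_adjoint_blinfun] algebra_simps)
  qed
  then obtain \<nu> where "(\<lambda>k. inverse (t k) *\<^sub>R (m k - \<mu>)) \<longlonglongrightarrow> \<nu>" "adjoint (F' x0) \<nu> = y - adjoint (F'' v) \<mu>"
    using multiplier_quotient_tendsto[OF surj_F' t Q z] by blast
  with m show thesis unfolding x_def by (intro that) (auto elim: eventually_mono)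
qed

lemma tangent_cone_graph_subset_pullback_cone:
  "tangent_cone (graph_mf (reg_normal_cone A)) (x0, adjoint (F' x0) \<mu>)
     \<subseteq> pullback_cone (F' x0) (\<lambda>v. adjoint (F'' v) \<mu>) (tangent_cone (graph_mf (reg_normal_cone \<Theta>)) (F x0, \<mu>))"
proof clarify
  fix v y assume "(v, y) \<in> tangent_cone (graph_mf (reg_normal_cone A)) (x0, adjoint (F' x0) \<mu>)"
  then obtain t u where t: "\<forall>k. t k > (0::real)" "t \<longlonglongrightarrow> 0" and u: "u \<longlonglongrightarrow> (v, y)"
    and mem: "\<forall>k. (x0, adjoint (F' x0) \<mu>) + t k *\<^sub>R u k \<in> graph_mf (reg_normal_cone A)"
    unfolding tangent_cone_def by blast
  define q where "q k = fst (u k)" for k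
  define z where "z k = snd (u k)" for k
  have q: "q \<longlonglongrightarrow> v" and z: "z \<longlonglongrightarrow> y"
    unfolding q_def z_def using tendsto_fst[OF u] tendsto_snd[OF u] by simp_all
  have "adjoint (F' x0) \<mu> + t k *\<^sub>R z k \<in> reg_normal_cone A (x0 + t k *\<^sub>R q k)" for k
    using mem[rule_format, of k] unfolding graph_mf_def q_def z_def by (cases "u k") auto
  then obtain m \<nu> where m: "\<forall>\<^sub>F k in sequentially. m k \<in> reg_normal_cone \<Theta> (F (x0 + t k *\<^sub>R q k))"
    and \<nu>: "(\<lambda>k. inverse (t k) *\<^sub>R (m k - \<mu>)) \<longlonglongrightarrow> \<nu>" and L\<nu>: "adjoint (F' x0) \<nu> = y - adjoint (F'' v) \<mu>"
    by (rule normal_multipliers_tendsto[OF t q z])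
  have "\<forall>\<^sub>F k in sequentially. (F x0, \<mu>) + t k *\<^sub>R (inverse (t k) *\<^sub>R (F (x0 + t k *\<^sub>R q k) - F x0),
      inverse (t k) *\<^sub>R (m k - \<mu>)) \<in> graph_mf (reg_normal_cone \<Theta>)"
    using m by eventually_elim (use t(1) in \<open>simp add: graph_mf_def less_imp_neq[symmetric]\<close>)
  then have "(F' x0 v, \<nu>) \<in> tangent_cone (graph_mf (reg_normal_cone \<Theta>)) (F x0, \<mu>)"
    by (rule tangent_coneI_eventually[OF t tendsto_Pair[OF tendsto_difference_quotient[OF has_derivative_F t q] \<nu>]])
  then show "(v, y) \<in> pullback_cone (F' x0) (\<lambda>v. adjoint (F'' v) \<mu>) (tangent_cone (graph_mf (reg_normal_cone \<Theta>)) (F x0, \<mu>))"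
    unfolding pullback_cone_def using L\<nu> by (auto intro!: exI[of _ \<nu>])
qed

lemma tangent_cone_graph_reg_normal_cone:
  "tangent_cone (graph_mf (reg_normal_cone A)) (x0, adjoint (F' x0) \<mu>)
     = pullback_cone (F' x0) (\<lambda>v. adjoint (F'' v) \<mu>) (tangent_cone (graph_mf (reg_normal_cone \<Theta>)) (F x0, \<mu>))"
  using pullback_cone_subset_tangent_cone_graph tangent_cone_graph_subset_pullback_cone by (rule antisym[rotated])

theorem reg_coderiv_reg_normal_cone_preimage:
  assumes \<mu>: "\<mu> \<in> reg_normal_cone \<Theta> (F x0)"
  shows "reg_coderiv (reg_normal_cone A) x0 (adjoint (F' x0) \<mu>) w
    = {adjoint (F'' w) \<mu> + adjoint (F' x0) \<eta> | \<eta>. \<eta> \<in> reg_coderiv (reg_normal_cone \<Theta>) (F x0) \<mu> (F' x0 w)}"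
proof -
  have graph_A: "(x0, adjoint (F' x0) \<mu>) \<in> graph_mf (reg_normal_cone A)"
    using eventually_nhds_x_imp_x[OF reg_normal_cone_preimage] \<mu> unfolding graph_mf_def by auto
  have graph_\<Theta>: "(F x0, \<mu>) \<in> graph_mf (reg_normal_cone \<Theta>)"
    using \<mu> by (simp add: graph_mf_def)
  have H: "w \<bullet> adjoint (F'' v) \<mu> = adjoint (F'' w) \<mu> \<bullet> v" for v w
    using inner_second_derivative_symmetric[of \<mu> v w]
    by (simp add: adjoint_clauses[OF linear_blinfun_apply] inner_commute)
  have "(0, 0) \<in> tangent_cone (graph_mf (reg_normal_cone \<Theta>)) (F x0, \<mu>)"
    using zero_in_tangent_cone[OF graph_\<Theta>] by (simp add: zero_prod_def)
  note slice = polar_cone_pullback_cone_slice[OF linear_blinfun_apply surj_F' H this, of w]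
  show ?thesis
    unfolding reg_coderiv_def reg_normal_cone_def[of "graph_mf _"] if_P[OF graph_A] if_P[OF graph_\<Theta>]
      tangent_cone_graph_reg_normal_cone slice by simp
qed

lemma submersion_constraint_compose:
  fixes g :: "'n::euclidean_space \<Rightarrow> 'a" and g' g'' :: "'n \<Rightarrow> ('n \<Rightarrow>\<^sub>L 'a)"
  assumes g: "\<And>z. (g has_derivative g' z) (at z)" and g': "(g' has_derivative g'') (at z0)"
    and continuous_g': "continuous_on UNIV g'" and z0: "g z0 = x0" and surj: "surj (F' x0 \<circ> g' z0)"
  shows "submersion_constraint (\<lambda>z. F (g z)) (\<lambda>z. F' (g z) o\<^sub>L g' z)
      (\<lambda>w. (F' x0 o\<^sub>L g'' w) + (F'' (g' z0 w) o\<^sub>L g' z0)) z0 \<Theta> (g -` A) (g -` U)"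
proof
  show "((\<lambda>z. F (g z)) has_derivative F' (g z) o\<^sub>L g' z) (at z)" for z
  proof -
    have "blinfun_apply (F' (g z) o\<^sub>L g' z) = (\<lambda>v. F' (g z) (g' z v))" by auto
    then show ?thesis using has_derivative_compose[OF g has_derivative_F] by simp
  qed
  have F'g: "((\<lambda>z. F' (g z)) has_derivative (\<lambda>v. F'' (g' z0 v))) (at z0)"
    using has_derivative_compose[OF g has_derivative_F'[folded z0]] by simp
  show "((\<lambda>z. F' (g z) o\<^sub>L g' z) has_derivative (\<lambda>w. (F' x0 o\<^sub>L g'' w) + (F'' (g' z0 w) o\<^sub>L g' z0))) (at z0)"
    using bounded_bilinear.FDERIV[OF bounded_bilinear_blinfun_compose F'g g'] z0 by simp
  have "continuous_on UNIV g"
    by (simp add: continuous_at_imp_continuous_on has_derivative_continuous[OF g])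
  then have "continuous_on UNIV (\<lambda>z. F' (g z))"
    using continuous_on_compose2[OF continuous_F'] by blast
  then show "continuous_on UNIV (\<lambda>z. F' (g z) o\<^sub>L g' z)"
    using bounded_bilinear.continuous_on[OF bounded_bilinear_blinfun_compose _ continuous_g'] by blast
  show "open (g -` U)"
    using \<open>continuous_on UNIV g\<close> open_U by (simp add: continuous_on_open_vimage)
  show "surj (F' (g z0) o\<^sub>L g' z0)" using surj z0 by (simp add: comp_def)
  show "z0 \<in> g -` U" using x0_in_U z0 by simp
  show "g -` A \<inter> g -` U = {z \<in> g -` U. F (g z) \<in> \<Theta>}" using A_local by auto
qed


lemma reg_coderiv_reg_normal_cone_preimage_compose:
  fixes g :: "'n::euclidean_space \<Rightarrow> 'a" and g' :: "'n \<Rightarrow> ('n \<Rightarrow>\<^sub>L 'a)"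
    and g'' :: "'n \<Rightarrow> ('n \<Rightarrow>\<^sub>L ('n \<Rightarrow>\<^sub>L 'a))"
  assumes g: "\<And>z. (g has_derivative g' z) (at z)" and g': "\<And>z. (g' has_derivative g'' z) (at z)"
    and z0: "g z0 = x0" and transversal: "{a + b | a b. a \<in> range (g' z0) \<and> F' x0 b = 0} = UNIV"
    and lam: "lam \<in> reg_normal_cone A x0"
  shows "reg_coderiv (reg_normal_cone (g -` A)) z0 (adjoint (g' z0) lam) w
    = {hess_vec lam (g'' z0) w + adjoint (g' z0) y | y. y \<in> reg_coderiv (reg_normal_cone A) x0 lam (g' z0 w)}"
proof -
  interpret \<Gamma>: submersion_constraint "\<lambda>z. F (g z)" "\<lambda>z. F' (g z) o\<^sub>L g' z"
      "\<lambda>w. (F' x0 o\<^sub>L g'' z0 w) + (F'' (g' z0 w) o\<^sub>L g' z0)" z0 \<Theta> "g -` A" "g -` U"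
    by (rule submersion_constraint_compose[OF g g'[of z0] _ z0 surj_comp_of_transversal[OF linear_blinfun_apply surj_F' transversal]])
      (simp add: continuous_at_imp_continuous_on has_derivative_continuous[OF g'])
  obtain \<mu> where \<mu>: "\<mu> \<in> reg_normal_cone \<Theta> (F x0)" and lam_eq: "lam = adjoint (F' x0) \<mu>"
    using lam eventually_nhds_x_imp_x[OF reg_normal_cone_preimage] by auto
  have chain_rule: "adjoint ((F' x0 o\<^sub>L g'' z0 w) + (F'' (g' z0 w) o\<^sub>L g' z0)) \<mu> + adjoint (F' x0 o\<^sub>L g' z0) \<eta>
      = hess_vec lam (g'' z0) w + adjoint (g' z0) (adjoint (F'' (g' z0 w)) \<mu> + adjoint (F' x0) \<eta>)" for \<eta>
    by (simp add: lam_eq adjoint_second_derivative_compose adjoint_blinfun_compose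
        linear_add[OF linear_adjoint_blinfun] add.assoc)
  define C where "C = reg_coderiv (reg_normal_cone \<Theta>) (F x0) \<mu> (F' x0 (g' z0 w))"
  have "reg_coderiv (reg_normal_cone (g -` A)) z0 (adjoint (g' z0) lam) w
      = {adjoint ((F' x0 o\<^sub>L g'' z0 w) + (F'' (g' z0 w) o\<^sub>L g' z0)) \<mu> + adjoint (F' x0 o\<^sub>L g' z0) \<eta> | \<eta>. \<eta> \<in> C}"
    using \<Gamma>.reg_coderiv_reg_normal_cone_preimage[of \<mu> w] \<mu> z0
    unfolding C_def lam_eq by (simp add: adjoint_blinfun_compose)
  also have "\<dots> = {hess_vec lam (g'' z0) w + adjoint (g' z0) y | y.
      y \<in> {adjoint (F'' (g' z0 w)) \<mu> + adjoint (F' x0) \<eta> | \<eta>. \<eta> \<in> C}}"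
    unfolding chain_rule by blast
  also have "{adjoint (F'' (g' z0 w)) \<mu> + adjoint (F' x0) \<eta> | \<eta>. \<eta> \<in> C}
      = reg_coderiv (reg_normal_cone A) x0 lam (g' z0 w)"
    unfolding lam_eq C_def by (rule reg_coderiv_reg_normal_cone_preimage[OF \<mu>, symmetric])
  finally show ?thesis .
qed
end

theorem mainTheorem6:
  fixes g :: "'n::euclidean_space \<Rightarrow> 's::euclidean_space"
    and g' :: "'n \<Rightarrow> ('n \<Rightarrow>\<^sub>L 's)"
    and g'' :: "'n \<Rightarrow> ('n \<Rightarrow>\<^sub>L ('n \<Rightarrow>\<^sub>L 's))"
    and D :: "'s set"
    and h :: "'s \<Rightarrow> 'd::euclidean_space"
    and h' :: "'s \<Rightarrow> ('s \<Rightarrow>\<^sub>L 'd)"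
    and h'' :: "'s \<Rightarrow> ('s \<Rightarrow>\<^sub>L ('s \<Rightarrow>\<^sub>L 'd))"
    and \<Theta> :: "'d set"
    and V :: "'s set"
    and xbar :: 'n and xstar :: 'n and lambar :: 's and w :: 'n
  assumes g_d1: "\<And>x. (g has_derivative blinfun_apply (g' x)) (at x)"
    and g_d2: "\<And>x. (g' has_derivative blinfun_apply (g'' x)) (at x)"
    and g_c2: "continuous_on UNIV g''"
    and D_closed: "closed D"
    and xbar_in: "xbar \<in> g -` D"
    and A1_h_d1: "\<And>z. (h has_derivative blinfun_apply (h' z)) (at z)"
    and A1_h_d2: "\<And>z. (h' has_derivative blinfun_apply (h'' z)) (at z)"
    and A1_h_c2: "continuous_on UNIV h''"
    and A1_Theta: "closed \<Theta>"
    and A1_V: "open V" "g xbar \<in> V"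
    and A1_surj: "range (blinfun_apply (h' (g xbar))) = UNIV"
    and A1_D: "D \<inter> V = {z \<in> V. h z \<in> \<Theta>}"
    and A2: "{a + b | a b. a \<in> range (blinfun_apply (g' xbar))
                         \<and> blinfun_apply (h' (g xbar)) b = 0} = UNIV"
    and xstar_normal: "xstar \<in> reg_normal_cone (g -` D) xbar"
    and lam_normal: "lambar \<in> reg_normal_cone D (g xbar)"
    and lam_mult: "adjoint (blinfun_apply (g' xbar)) lambar = xstar"
  shows "reg_coderiv (reg_normal_cone (g -` D)) xbar xstar w
       = {hess_vec lambar (g'' xbar) w + adjoint (blinfun_apply (g' xbar)) y | y.
            y \<in> reg_coderiv (reg_normal_cone D) (g xbar) lambar (blinfun_apply (g' xbar) w)}"
proof -
  interpret D: submersion_constraint h h' "h'' (g xbar)" "g xbar" \<Theta> D V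
    using A1_h_d1 A1_h_d2 A1_surj A1_V A1_D
    by unfold_locales (auto simp: continuous_at_imp_continuous_on has_derivative_continuous[OF A1_h_d2])
  show ?thesis
    using D.reg_coderiv_reg_normal_cone_preimage_compose[OF g_d1 g_d2 refl A2 lam_normal] lam_mult by simp
qed

end
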